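(* Let $p\ge1$, let $s_1,\dots,s_p\in\mathbb{Z}$ with at least one $s_j\le0$, and let $z_1,\dots,z_p$ be complex numbers with $|z_j|<1$ for all $j$. Then $\mathrm{La}_{s_1,\dots,s_p}(z_1,\dots,z_p)$ is a finite linear combination of multiple polylogarithms $\mathrm{La}_{s'_1,\dots,s'_q}(z_1^*,\dots,z_q^* )$ with $0\le q\le p$, all $s'_j\ge1$, each $z_i^*$ a product of some of the $z_j$, and $\sum_{j=1}^qs'_j\le\sum_{j=1}^p\max(0,s_j)$; the coefficients are polynomials with rational coefficients in the quantities $(1-z_{j_1}\cdots z_{j_m})^{-1}$ ($m\ge1$, $1\le j_1<\cdots<j_m\le p$) and $z_j^{\pm1}$ ($1\le j\le p$).
   Context: $\mathrm{La}_{s_1,\dots,s_p}(z_1,\dots,z_p)=\sum_{k_1\ge k_2\ge\cdots\ge k_p\ge1}\frac{z_1^{k_1}\cdots z_p^{k_p}}{k_1^{s_1}\cdots k_p^{s_p}}$; the polylogarithm of depth $0$ is the constant $1$. *)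

theory Defs
  imports "HOL-Analysis.Analysis"
begin

definition La_index :: "nat \<Rightarrow> nat list set" where
  "La_index p = {ks. length ks = p \<and> sorted_wrt (\<ge>) ks \<and> (\<forall>k\<in>set ks. 1 \<le> k)}"

text \<open>Depth 0 gives the constant 1 (index set is the singleton of the empty list).\<close>
definition La :: "int list \<Rightarrow> complex list \<Rightarrow> complex" where
  "La s z = infsum (\<lambda>ks. \<Prod>j<length s. (z ! j) ^ (ks ! j) / (of_nat (ks ! j)) powi (s ! j))
                    (La_index (length s))"

datatype cexpr =
    CConst rat
  | CInvOneMinus "nat set"
  | CZ nat
  | CZinv nat
  | CAdd cexpr cexpr
  | CMul cexpr cexpr

fun ceval :: "cexpr \<Rightarrow> complex list \<Rightarrow> complex" where
  "ceval (CConst c) z = of_rat c"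
| "ceval (CInvOneMinus J) z = inverse (1 - (\<Prod>j\<in>J. z ! j))"
| "ceval (CZ j) z = z ! j"
| "ceval (CZinv j) z = inverse (z ! j)"
| "ceval (CAdd a b) z = ceval a z + ceval b z"
| "ceval (CMul a b) z = ceval a z * ceval b z"

fun cexpr_wf :: "nat \<Rightarrow> cexpr \<Rightarrow> bool" where
  "cexpr_wf p (CConst c) = True"
| "cexpr_wf p (CInvOneMinus J) = (J \<noteq> {} \<and> J \<subseteq> {..<p})"
| "cexpr_wf p (CZ j) = (j < p)"
| "cexpr_wf p (CZinv j) = (j < p)"
| "cexpr_wf p (CAdd a b) = (cexpr_wf p a \<and> cexpr_wf p b)"
| "cexpr_wf p (CMul a b) = (cexpr_wf p a \<and> cexpr_wf p b)"

end

theory Submission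
  imports Defs
begin

text \<open>
  Pick an index s_j = -n <= 0 and write c = z_j.  For g(k) = (k - 1)^n c^k the binomial theorem gives
  g(k) - g(k+1) = (1 - c) k^n c^k + (sum over l < n of C(n,l) (-1)^(n-l) k^l c^k), so summing over
  k_j between its neighbours k_(j+1) <= k_j <= k_(j-1) (with k_(p+1) = 1 and no upper bound if j = 1)
  telescopes: (1 - c) La_s + sum over l < n of C(n,l) (-1)^(n-l) La_(s[j := -l]) equals the boundary
  terms g(k_(j+1)) - g(k_(j-1) + 1).  After expanding (k_(j+1) - 1)^n binomially, each boundary term
  absorbs c and a power of k_(j+1) resp. k_(j-1) into that neighbour: it is a polylogarithm of depth
  p - 1 with variable z_(j+1) c resp. z_(j-1) c and index s_(j+1) - a resp. s_(j-1) - n, so the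
  positive weight does not grow.  Dividing by 1 - c and inducting on the depth and on n expresses La_s
  by polylogarithms with positive indices.  Their variables are products of the z_i over disjoint
  blocks of indices, which keeps them in the unit disc.
\<close>

section \<open>Convergence of the defining series\<close>

lemma summable_real_power_mult_geometric:
  fixes r :: real
  assumes "0 \<le> r" "r < 1"
  shows "summable (\<lambda>n. real n ^ m * r ^ n)"
proof -
  have "conv_radius (\<lambda>n. real n ^ m) = 1"
  proof (rule conv_radius_ratio_limit_nonzero[of _ 1])
    have "(\<lambda>n. (real n / real (Suc n)) ^ m) \<longlonglongrightarrow> 1 ^ m"
      by (intro tendsto_power LIMSEQ_n_over_Suc_n)
    then show "(\<lambda>n. norm (real n ^ m) / norm (real (Suc n) ^ m)) \<longlonglongrightarrow> 1"
      by (simp add: power_divide)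
  qed auto
  then have "ereal (norm r) < conv_radius (\<lambda>n. real n ^ m)"
    using assms by simp
  then show ?thesis
    by (rule summable_in_conv_radius)
qed

lemma summable_on_prod_lists:
  fixes f :: "nat \<Rightarrow> nat \<Rightarrow> real"
  assumes "\<And>i k. f i k \<ge> 0" "\<And>i. i < q \<Longrightarrow> f i summable_on UNIV"
  shows "(\<lambda>ks. \<Prod>i<q. f i (ks!i)) summable_on {ks. length ks = q}"
  using assms
proof (induction q arbitrary: f)
  case 0
  have "{ks::nat list. length ks = 0} = {[]}" by auto
  then show ?case by simp
next
  case (Suc q)
  define G where "G ks = (\<Prod>i<q. f (Suc i) (ks!i))" for ks
  have G: "G summable_on {ks. length ks = q}"
    unfolding G_def by (rule Suc.IH) (use Suc.prems in auto)
  define S where "S = infsum G {ks. length ks = q}"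
  have "((\<lambda>ks. f 0 k * G ks) has_sum f 0 k * S) {ks. length ks = q}" for k
    unfolding S_def by (rule has_sum_cmult_right) (use G in auto)
  moreover have "(\<lambda>k. f 0 k * S) summable_on UNIV"
    by (rule summable_on_cmult_left) (use Suc.prems in auto)
  ultimately have "(\<lambda>(k, ks). f 0 k * G ks) summable_on (UNIV \<times> {ks. length ks = q})"
    using Suc.prems
    by (intro summable_on_SigmaI[where g="\<lambda>k. f 0 k * S"])
       (auto simp: G_def intro!: mult_nonneg_nonneg prod_nonneg)
  moreover have "(\<Prod>i<Suc q. f i ((k#ks)!i)) = f 0 k * G ks" for k ks
    unfolding G_def prod.lessThan_Suc_shift by simp
  ultimately have "(\<lambda>(k, ks). \<Prod>i<Suc q. f i ((k#ks)!i)) summable_on (UNIV \<times> {ks. length ks = q})"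
    by (simp add: case_prod_unfold)
  moreover have "bij_betw (\<lambda>(k, ks). k#ks) (UNIV \<times> {ks. length ks = q}) {ks. length ks = Suc q}"
    by (rule bij_betwI[where g="\<lambda>ks. (hd ks, tl ks)"]) (auto simp: length_Suc_conv)
  ultimately show ?case
    using summable_on_reindex_bij_betw by (fastforce simp: case_prod_unfold)
qed

definition La_term :: "int list \<Rightarrow> complex list \<Rightarrow> nat list \<Rightarrow> complex" where
  "La_term s w ks = (\<Prod>j<length s. (w ! j) ^ (ks ! j) / (of_nat (ks ! j)) powi (s ! j))"

lemma norm_power_div_powi_le:
  fixes w :: complex
  assumes "k \<ge> 1"
  shows "norm (w ^ k / (of_nat k) powi s) \<le> norm w ^ k * real k ^ nat \<bar>s\<bar>"
proof -
  have "norm (w ^ k / (of_nat k) powi s) = norm w ^ k / (real k powi s)"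
    by (simp add: norm_divide norm_power norm_power_int)
  also have "\<dots> \<le> norm w ^ k * real k ^ nat \<bar>s\<bar>"
  proof (cases "s \<ge> 0")
    case True
    then have "real k powi s \<ge> 1"
      using assms by (metis of_nat_1 of_nat_le_iff one_le_power_int)
    then have "norm w ^ k / (real k powi s) \<le> norm w ^ k"
      by (simp add: divide_le_eq mult_le_cancel_left1)
    also have "\<dots> \<le> norm w ^ k * real k ^ nat \<bar>s\<bar>"
      using assms by (simp add: mult_le_cancel_left1 one_le_power)
    finally show ?thesis .
  next
    case False
    then have "real k powi s = inverse (real k ^ nat \<bar>s\<bar>)"
      by (simp add: power_int_def power_inverse)
    then show ?thesis by (simp add: divide_inverse)
  qed
  finally show ?thesis .
qed

lemma La_term_abs_summable:
  assumes "length w = length s" "\<And>i. i < length s \<Longrightarrow> norm (w!i) < 1"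
  shows "(\<lambda>ks. norm (La_term s w ks)) summable_on La_index (length s)"
proof -
  define q where "q = length s"
  define f where "f i k = norm (w!i) ^ k * real k ^ nat \<bar>s!i\<bar>" for i k
  have f_summable: "f i summable_on UNIV" if "i < q" for i
  proof -
    have "summable (f i)"
      unfolding f_def using summable_real_power_mult_geometric[of "norm (w!i)" "nat \<bar>s!i\<bar>"] assms(2) that
      by (simp add: q_def mult.commute)
    then show ?thesis
      by (subst summable_on_UNIV_nonneg_real_iff) (auto simp: f_def)
  qed
  have "(\<lambda>ks. \<Prod>i<q. f i (ks!i)) summable_on {ks. length ks = q}"
    by (rule summable_on_prod_lists[OF _ f_summable]) (auto simp: f_def)
  then have "(\<lambda>ks. \<Prod>i<q. f i (ks!i)) summable_on La_index q"
    by (rule summable_on_subset_banach) (auto simp: La_index_def)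
  then show ?thesis
    unfolding q_def[symmetric]
  proof (rule Infinite_Sum.abs_summable_on_comparison_test')
    fix ks assume ks: "ks \<in> La_index q"
    have "norm (La_term s w ks) = (\<Prod>i<q. norm ((w!i) ^ (ks!i) / (of_nat (ks!i)) powi (s!i)))"
      by (simp add: La_term_def q_def prod_norm)
    also have "\<dots> \<le> (\<Prod>i<q. f i (ks!i))"
      using ks unfolding f_def
      by (intro prod_mono) (auto simp: La_index_def intro: norm_power_div_powi_le)
    finally show "norm (La_term s w ks) \<le> (\<Prod>i<q. f i (ks!i))" .
  qed
qed

lemma has_sum_La:
  assumes "length s = m" "length w = m" "\<And>i. i < m \<Longrightarrow> norm (w!i) < 1"
  shows "(La_term s w has_sum La s w) (La_index m)"
proof -
  have "La_term s w summable_on La_index m"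
    using La_term_abs_summable[of w s] assms summable_on_iff_abs_summable_on_complex by auto
  moreover have "La s w = infsum (La_term s w) (La_index m)"
    unfolding La_def La_term_def[abs_def] using assms(1) by simp
  ultimately show ?thesis
    by (simp add: has_sum_infsum)
qed

section \<open>Splitting off one summation index\<close>

definition insert_nth :: "nat \<Rightarrow> 'a \<Rightarrow> 'a list \<Rightarrow> 'a list" where
  "insert_nth j x xs =
     map (\<lambda>i. if i < j then xs!i else if i = j then x else xs!(i-1)) [0..<Suc (length xs)]"

definition remove_nth :: "nat \<Rightarrow> 'a list \<Rightarrow> 'a list" where
  "remove_nth j xs = map (\<lambda>i. if i < j then xs!i else xs!(Suc i)) [0..<length xs - 1]"

lemma length_insert_nth [simp]: "length (insert_nth j x xs) = Suc (length xs)"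
  by (simp add: insert_nth_def)

lemma length_remove_nth [simp]: "length (remove_nth j xs) = length xs - 1"
  by (simp add: remove_nth_def)

lemma nth_insert_nth:
  "i \<le> length xs \<Longrightarrow> insert_nth j x xs ! i = (if i < j then xs!i else if i = j then x else xs!(i-1))"
  unfolding insert_nth_def by (simp del: upt_Suc)

lemma nth_remove_nth: "i < length xs - 1 \<Longrightarrow> remove_nth j xs ! i = (if i < j then xs!i else xs!(Suc i))"
  unfolding remove_nth_def by simp

lemma insert_nth_nth_same [simp]: "j \<le> length xs \<Longrightarrow> insert_nth j x xs ! j = x"
  by (simp add: nth_insert_nth)

lemma remove_nth_insert_nth [simp]: "j \<le> length xs \<Longrightarrow> remove_nth j (insert_nth j x xs) = xs"
  by (rule nth_equalityI) (auto simp: nth_remove_nth nth_insert_nth)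

lemma insert_nth_remove_nth: "j < length xs \<Longrightarrow> insert_nth j (xs!j) (remove_nth j xs) = xs"
  by (rule nth_equalityI) (auto simp: nth_remove_nth nth_insert_nth)

lemma remove_nth_map: "remove_nth j (map f xs) = map f (remove_nth j xs)"
  by (rule nth_equalityI) (auto simp: nth_remove_nth)

lemma remove_nth_list_update_same [simp]: "remove_nth j (xs[j := x]) = remove_nth j xs"
  by (rule nth_equalityI) (auto simp: nth_remove_nth)

lemma remove_nth_conv_take_drop: "j < length xs \<Longrightarrow> remove_nth j xs = take j xs @ drop (Suc j) xs"
  by (rule nth_equalityI) (auto simp: nth_remove_nth nth_append min_def)

definition merge_nth :: "('a \<Rightarrow> 'a \<Rightarrow> 'a) \<Rightarrow> nat \<Rightarrow> nat \<Rightarrow> 'a list \<Rightarrow> 'a list" where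
  "merge_nth f t j xs = (remove_nth j xs)[t := f (remove_nth j xs ! t) (xs!j)]"

lemma length_merge_nth [simp]: "length (merge_nth f t j xs) = length xs - 1"
  by (simp add: merge_nth_def)

lemma prod_lessThan_Suc_remove:
  fixes h :: "nat \<Rightarrow> 'a::comm_monoid_mult"
  assumes "j \<le> m"
  shows "(\<Prod>i<Suc m. h i) = h j * (\<Prod>i<m. h (if i < j then i else Suc i))"
proof -
  have "(\<Prod>i<Suc m. h i) = h j * (\<Prod>i\<in>{..<Suc m} - {j}. h i)"
    using assms by (subst prod.remove[of _ j]) auto
  also have "(\<Prod>i\<in>{..<Suc m} - {j}. h i) = (\<Prod>i<m. h (if i < j then i else Suc i))"
    by (rule prod.reindex_bij_witness[where j="\<lambda>i. if i < j then i else i - 1"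
          and i="\<lambda>i. if i < j then i else Suc i"]) (use assms in auto)
  finally show ?thesis .
qed

lemma La_index_iff_nth:
  "ks \<in> La_index m \<longleftrightarrow>
     length ks = m \<and> (\<forall>i. Suc i < m \<longrightarrow> ks!Suc i \<le> ks!i) \<and> (\<forall>i<m. 1 \<le> ks!i)"
proof -
  have "transp (\<lambda>x y::nat. y \<le> x)" by (auto simp: transp_def)
  from sorted_wrt_iff_nth_Suc_transp[OF this, of ks] show ?thesis
    unfolding La_index_def by (auto simp: all_set_conv_all_nth)
qed

lemma La_index_nth_ge_1:
  "ks \<in> La_index m \<Longrightarrow> i < m \<Longrightarrow> 1 \<le> ks!i"
  by (auto simp: La_index_def)

definition fiber_lower :: "nat \<Rightarrow> nat list \<Rightarrow> nat" where
  "fiber_lower j ks = (if j < length ks then ks!j else 1)"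

definition La_fiber :: "nat \<Rightarrow> nat list \<Rightarrow> nat set" where
  "La_fiber j ks = {k. fiber_lower j ks \<le> k \<and> (0 < j \<longrightarrow> k \<le> ks!(j-1))}"

lemma insert_nth_in_La_index:
  assumes "ks \<in> La_index m" "j \<le> m" "k \<in> La_fiber j ks"
  shows "insert_nth j k ks \<in> La_index (Suc m)"
proof -
  have L: "length ks = m" and S: "\<And>i. Suc i < m \<Longrightarrow> ks!Suc i \<le> ks!i"
    and P: "\<And>i. i < m \<Longrightarrow> 1 \<le> ks!i"
    using assms(1) by (auto simp: La_index_iff_nth)
  have k1: "fiber_lower j ks \<le> k" and k2: "0 < j \<Longrightarrow> k \<le> ks!(j-1)"
    using assms(3) by (auto simp: La_fiber_def)
  have "1 \<le> fiber_lower j ks"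
    using P L by (auto simp: fiber_lower_def)
  with k1 have k_pos: "1 \<le> k" by linarith
  have "insert_nth j k ks ! Suc i \<le> insert_nth j k ks ! i" if "Suc i < Suc m" for i
  proof -
    consider "Suc i < j" | "Suc i = j" | "i = j" | "i > j" by linarith
    then show ?thesis
    proof cases
      case 1 then show ?thesis using that L S[of i] assms(2) by (simp add: nth_insert_nth)
    next
      case 2 then show ?thesis using that L k2 by (auto simp: nth_insert_nth)
    next
      case 3 then show ?thesis using that L k1 by (auto simp: nth_insert_nth fiber_lower_def)
    next
      case 4 then show ?thesis using that L S[of "i-1"] by (auto simp: nth_insert_nth)
    qed
  qed
  moreover have "1 \<le> insert_nth j k ks ! i" if "i < Suc m" for i
    using that L P k_pos assms(2) by (auto simp: nth_insert_nth)
  ultimately show ?thesis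
    using L by (auto simp: La_index_iff_nth)
qed

lemma remove_nth_in_La_index:
  assumes "ks \<in> La_index (Suc m)" "j \<le> m"
  shows "remove_nth j ks \<in> La_index m" "ks!j \<in> La_fiber j (remove_nth j ks)"
proof -
  have L: "length ks = Suc m" and S: "\<And>i. Suc i < Suc m \<Longrightarrow> ks!Suc i \<le> ks!i"
    and P: "\<And>i. i < Suc m \<Longrightarrow> 1 \<le> ks!i"
    using assms(1) by (auto simp: La_index_iff_nth)
  have "remove_nth j ks ! Suc i \<le> remove_nth j ks ! i" if "Suc i < m" for i
  proof -
    consider "Suc i < j" | "Suc i = j" | "j \<le> i" by linarith
    then show ?thesis
    proof cases
      case 1 then show ?thesis using that L S by (simp add: nth_remove_nth)
    next
      case 2 then show ?thesis using that L S[of i] S[of "Suc i"] by (auto simp: nth_remove_nth)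
    next
      case 3 then show ?thesis using that L S[of "Suc i"] by (auto simp: nth_remove_nth)
    qed
  qed
  moreover have "1 \<le> remove_nth j ks ! i" if "i < m" for i
    using that L P by (auto simp: nth_remove_nth)
  ultimately show "remove_nth j ks \<in> La_index m"
    using L by (auto simp: La_index_iff_nth)
  have "fiber_lower j (remove_nth j ks) \<le> ks!j"
    using L S[of j] P[of j] assms(2) by (auto simp: fiber_lower_def nth_remove_nth)
  moreover have "ks!j \<le> remove_nth j ks ! (j-1)" if "0 < j"
    using L S[of "j-1"] that assms(2) by (auto simp: nth_remove_nth)
  ultimately show "ks!j \<in> La_fiber j (remove_nth j ks)"
    by (auto simp: La_fiber_def)
qed

lemma bij_betw_insert_nth_La_index:
  assumes "j \<le> m"
  shows "bij_betw (\<lambda>(ks, k). insert_nth j k ks) (Sigma (La_index m) (La_fiber j)) (La_index (Suc m))"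
proof (rule bij_betwI[where g="\<lambda>ks. (remove_nth j ks, ks!j)"])
  show "(\<lambda>(ks, k). insert_nth j k ks) \<in> Sigma (La_index m) (La_fiber j) \<rightarrow> La_index (Suc m)"
    using insert_nth_in_La_index assms by auto
  show "(\<lambda>ks. (remove_nth j ks, ks!j)) \<in> La_index (Suc m) \<rightarrow> Sigma (La_index m) (La_fiber j)"
    using remove_nth_in_La_index assms by auto
  show "(\<lambda>ks. (remove_nth j ks, ks!j)) (case x of (ks, k) \<Rightarrow> insert_nth j k ks) = x"
    if "x \<in> Sigma (La_index m) (La_fiber j)" for x
    using that assms by (auto simp: La_index_def)
  show "(case (remove_nth j ks, ks!j) of (ks, k) \<Rightarrow> insert_nth j k ks) = ks"
    if "ks \<in> La_index (Suc m)" for ks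
    using that assms insert_nth_remove_nth[of j ks] by (auto simp: La_index_def)
qed

lemma has_sum_La_index_Suc:
  fixes F :: "nat list \<Rightarrow> complex"
  assumes "(F has_sum S) (La_index (Suc m))" "j \<le> m"
    and "\<And>ks. ks \<in> La_index m \<Longrightarrow> ((\<lambda>k. F (insert_nth j k ks)) has_sum G ks) (La_fiber j ks)"
  shows "(G has_sum S) (La_index m)"
proof -
  have "((\<lambda>x. F ((\<lambda>(ks, k). insert_nth j k ks) x)) has_sum S) (Sigma (La_index m) (La_fiber j))"
    using has_sum_reindex_bij_betw[OF bij_betw_insert_nth_La_index[OF assms(2)]] assms(1) by blast
  then show ?thesis
    by (rule has_sum_Sigma') (use assms(3) in auto)
qed

lemma La_term_insert_nth:
  assumes "length s = Suc m" "length w = Suc m" "length ks = m" "j \<le> m"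
  shows "La_term s w (insert_nth j k ks) =
           (w!j)^k / (of_nat k) powi (s!j) * La_term (remove_nth j s) (remove_nth j w) ks"
  unfolding La_term_def length_remove_nth assms(1)
  by (subst prod_lessThan_Suc_remove[OF assms(4)], rule arg_cong2[where f="(*)"])
     (use assms in \<open>auto simp: nth_insert_nth nth_remove_nth intro!: prod.cong\<close>)

lemma La_term_list_update:
  assumes "i < length s" "length w = length s" "ks!i \<noteq> 0"
  shows "La_term s w ks * (of_nat (ks!i))^a * c^(ks!i) = La_term (s[i := s!i - int a]) (w[i := w!i * c]) ks"
proof -
  define f where "f s w j = (w!j)^(ks!j) / (of_nat (ks!j) :: complex) powi (s!j)" for s w j
  have "f (s[i := s!i - int a]) (w[i := w!i * c]) i = f s w i * ((of_nat (ks!i))^a * c^(ks!i))"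
    using assms by (simp add: f_def power_int_diff power_mult_distrib field_simps)
  moreover have "La_term s w ks = f s w i * (\<Prod>j\<in>{..<length s} - {i}. f s w j)"
    "La_term (s[i := s!i - int a]) (w[i := w!i * c]) ks =
       f (s[i := s!i - int a]) (w[i := w!i * c]) i * (\<Prod>j\<in>{..<length s} - {i}. f s w j)"
    using assms unfolding La_term_def f_def by (auto simp: prod.remove[of "{..<length s}" i] intro!: prod.cong)
  ultimately show ?thesis
    by (simp add: mult_ac)
qed

section \<open>The recurrence\<close>

lemma has_sum_sum:
  fixes f :: "'i \<Rightarrow> 'a \<Rightarrow> 'b::topological_comm_monoid_add"
  assumes "finite I" "\<And>i. i \<in> I \<Longrightarrow> (f i has_sum S i) A"
  shows "((\<lambda>x. \<Sum>i\<in>I. f i x) has_sum (\<Sum>i\<in>I. S i)) A"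
  using assms by (induction I rule: finite_induct) (auto intro: has_sum_add)

lemma has_sum_telescope_atLeast:
  fixes g :: "nat \<Rightarrow> 'a::banach"
  assumes "summable (\<lambda>k. norm (g k))"
  shows "((\<lambda>k. g k - g (Suc k)) has_sum g a) {a..}"
proof -
  have lim: "(\<lambda>i. g (i + a)) \<longlonglongrightarrow> 0"
    using summable_LIMSEQ_zero[OF summable_norm_cancel[OF assms]]
    by (rule LIMSEQ_ignore_initial_segment)
  have "(\<lambda>i. g (i + a) - g (Suc (i + a))) sums g a"
    using telescope_sums'[OF lim] by simp
  moreover have "summable (\<lambda>i. norm (g (i + a) - g (Suc (i + a))))"
  proof -
    have "summable (\<lambda>i. norm (g (i + a)))"
      using assms by (rule summable_ignore_initial_segment)
    moreover have "summable (\<lambda>i. norm (g (Suc (i + a))))"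
      using summable_ignore_initial_segment[OF assms, of "Suc a"] by simp
    ultimately have "summable (\<lambda>i. norm (g (i + a)) + norm (g (Suc (i + a))))"
      by (rule summable_add)
    then show ?thesis
      by (rule summable_comparison_test[rotated]) (auto intro: norm_triangle_ineq4)
  qed
  ultimately have "((\<lambda>i. g (i + a) - g (Suc (i + a))) has_sum g a) UNIV"
    by (intro norm_summable_imp_has_sum)
  moreover have "{a..} = (\<lambda>i. i + a) ` UNIV"
    by (auto simp: image_iff) presburger
  ultimately show ?thesis
    using has_sum_reindex[of "\<lambda>i. i + a" UNIV "\<lambda>k. g k - g (Suc k)"] by (simp add: o_def)
qed

lemma has_sum_telescope_La_fiber:
  fixes g :: "nat \<Rightarrow> 'a::banach"
  assumes ks: "ks \<in> La_index m" and j: "j \<le> m" and g: "summable (\<lambda>k. norm (g k))"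
  shows "((\<lambda>k. g k - g (Suc k)) has_sum
           g (fiber_lower j ks) - (if 0 < j then g (Suc (ks!(j-1))) else 0)) (La_fiber j ks)"
proof (cases "0 < j")
  case True
  have "length ks = m" and sorted: "Suc (j-1) < m \<Longrightarrow> ks!Suc (j-1) \<le> ks!(j-1)"
    and pos: "j-1 < m \<Longrightarrow> 1 \<le> ks!(j-1)"
    using ks by (auto simp: La_index_iff_nth)
  then have le: "fiber_lower j ks \<le> ks!(j-1)"
    using True j by (auto simp: fiber_lower_def)
  have "(\<Sum>k\<in>{fiber_lower j ks..ks!(j-1)}. g k - g (Suc k)) =
          - (\<Sum>k\<in>{fiber_lower j ks..ks!(j-1)}. g (Suc k) - g k)"
    by (simp add: sum_negf[symmetric])
  also have "\<dots> = g (fiber_lower j ks) - g (Suc (ks!(j-1)))"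
    using le by (subst sum_Suc_diff) auto
  moreover have "La_fiber j ks = {fiber_lower j ks..ks!(j-1)}"
    using True by (auto simp: La_fiber_def)
  ultimately show ?thesis
    using True by (intro has_sum_finiteI) simp_all
next
  case False
  then have "La_fiber j ks = {fiber_lower j ks..}"
    by (auto simp: La_fiber_def)
  then show ?thesis
    using has_sum_telescope_atLeast[OF g] False by simp
qed

definition pred_pow_geom :: "nat \<Rightarrow> complex \<Rightarrow> nat \<Rightarrow> complex" where
  "pred_pow_geom n c k = (of_nat k - 1)^n * c^k"

lemma summable_norm_pred_pow_geom:
  assumes "norm c < 1"
  shows "summable (\<lambda>k. norm (pred_pow_geom n c k))"
proof (rule summable_comparison_test'[where N=1])
  show "summable (\<lambda>k. real k ^ n * norm c ^ k)"
    using summable_real_power_mult_geometric[of "norm c" n] assms by simp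
  fix k :: nat assume "1 \<le> k"
  then have "(of_nat k - 1 :: complex) = of_nat (k - 1)"
    by (simp add: of_nat_diff)
  then have "norm (of_nat k - 1 :: complex) \<le> real k"
    by simp
  then show "norm (norm (pred_pow_geom n c k)) \<le> real k ^ n * norm c ^ k"
    unfolding pred_pow_geom_def real_norm_def abs_norm_cancel norm_mult norm_power
    by (auto intro!: mult_right_mono power_mono)
qed

lemma power_diff_one_binomial:
  fixes x :: "'a::comm_ring_1"
  shows "(x - 1)^n = (\<Sum>l\<le>n. of_nat (n choose l) * (-1)^(n-l) * x^l)"
  using binomial_ring[of x "-1" n] by (simp add: mult_ac)

lemma La_term_remove_nth:
  assumes "length s = Suc m" "length w = Suc m" "j \<le> m" "ks \<in> La_index (Suc m)"
  shows "La_term s w ks =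
           (w!j)^(ks!j) / (of_nat (ks!j)) powi (s!j) * La_term (remove_nth j s) (remove_nth j w) (remove_nth j ks)"
proof -
  have "length ks = Suc m"
    using assms(4) by (simp add: La_index_def)
  then show ?thesis
    using La_term_insert_nth[of s m w "remove_nth j ks" j "ks!j"] insert_nth_remove_nth[of j ks] assms(1-3)
    by simp
qed

lemma La_term_telescope:
  assumes len: "length s = Suc m" "length w = Suc m" and j: "j \<le> m" and sj: "s!j = - int n"
    and ks: "ks \<in> La_index (Suc m)"
  shows "La_term (remove_nth j s) (remove_nth j w) (remove_nth j ks) *
           (pred_pow_geom n (w!j) (ks!j) - pred_pow_geom n (w!j) (Suc (ks!j))) =
         (1 - w!j) * La_term s w ks
           + (\<Sum>l<n. of_nat (n choose l) * (-1)^(n-l) * La_term (s[j := - int l]) w ks)"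
proof -
  define k where "k = ks!j"
  define c where "c = w!j"
  define A where "A = La_term (remove_nth j s) (remove_nth j w) (remove_nth j ks)"
  have update: "La_term (s[j := - int l]) w ks = c^k * of_nat k^l * A" for l
    using La_term_remove_nth[of "s[j := - int l]" m w j ks] len j ks
    by (simp add: A_def c_def k_def power_int_minus divide_inverse)
  then have "La_term s w ks = c^k * of_nat k^n * A"
    by (metis list_update_id sj)
  moreover have "(of_nat k - 1 :: complex)^n = of_nat k ^ n + (\<Sum>l<n. of_nat (n choose l) * (-1)^(n-l) * of_nat k^l)"
    by (simp add: power_diff_one_binomial lessThan_Suc_atMost[symmetric])
  ultimately show ?thesis
    unfolding k_def[symmetric] c_def[symmetric] A_def[symmetric] update pred_pow_geom_def
    by (simp add: sum_distrib_left sum_distrib_right algebra_simps)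
qed

lemma has_sum_La_list_update:
  assumes len: "length s = m" "length w = m" and wn: "\<And>i. i < m \<Longrightarrow> norm (w!i) < 1"
    and c: "norm c < 1" and t: "t < m"
  shows "((\<lambda>ks. La_term s w ks * of_nat (ks!t)^a * c^(ks!t)) has_sum
           La (s[t := s!t - int a]) (w[t := w!t * c])) (La_index m)"
proof -
  have "norm (w!t * c) < 1"
    using mult_left_le[of "norm c" "norm (w!t)"] c wn[OF t] by (simp add: norm_mult)
  then have "norm (w[t := w!t * c] ! i) < 1" if "i < m" for i
    using wn[OF that] that len t by (cases "i = t") simp_all
  then have "(La_term (s[t := s!t - int a]) (w[t := w!t * c]) has_sum
               La (s[t := s!t - int a]) (w[t := w!t * c])) (La_index m)"
    using len by (intro has_sum_La) simp_all
  moreover have "La_term s w ks * of_nat (ks!t)^a * c^(ks!t) =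
                   La_term (s[t := s!t - int a]) (w[t := w!t * c]) ks" if "ks \<in> La_index m" for ks
    using La_index_nth_ge_1[OF that t] len t by (intro La_term_list_update) simp_all
  ultimately show ?thesis
    by (subst has_sum_cong) auto
qed

lemma has_sum_La_lower_boundary:
  assumes len: "length s = m" "length w = m" and wn: "\<And>i. i < m \<Longrightarrow> norm (w!i) < 1"
    and c: "norm c < 1" and j: "j \<le> m"
  shows "((\<lambda>ks. La_term s w ks * pred_pow_geom n c (fiber_lower j ks)) has_sum
           (if j < m then \<Sum>a\<le>n. of_nat (n choose a) * (-1)^(n-a) * La (s[j := s!j - int a]) (w[j := w!j * c])
            else 0^n * c * La s w)) (La_index m)"
proof (cases "j < m")
  case True
  have sum: "((\<lambda>ks. \<Sum>a\<le>n. of_nat (n choose a) * (-1)^(n-a) * (La_term s w ks * of_nat (ks!j)^a * c^(ks!j)))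
          has_sum (\<Sum>a\<le>n. of_nat (n choose a) * (-1)^(n-a) * La (s[j := s!j - int a]) (w[j := w!j * c])))
          (La_index m)"
    using assms True by (intro has_sum_sum has_sum_cmult_right has_sum_La_list_update) auto
  have eq: "La_term s w ks * pred_pow_geom n c (fiber_lower j ks) =
                   (\<Sum>a\<le>n. of_nat (n choose a) * (-1)^(n-a) * (La_term s w ks * of_nat (ks!j)^a * c^(ks!j)))"
    if "ks \<in> La_index m" for ks
    using that True
    by (simp add: pred_pow_geom_def fiber_lower_def La_index_def power_diff_one_binomial sum_distrib_left sum_distrib_right mult_ac)
  show ?thesis
    using True by (subst has_sum_cong[OF eq]) (simp_all add: sum)
next
  case False
  then have eq: "La_term s w ks * pred_pow_geom n c (fiber_lower j ks) = 0^n * c * La_term s w ks"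
    if "ks \<in> La_index m" for ks
    using that j by (simp add: pred_pow_geom_def fiber_lower_def La_index_def)
  have "((\<lambda>ks. 0^n * c * La_term s w ks) has_sum 0^n * c * La s w) (La_index m)"
    using assms by (intro has_sum_cmult_right has_sum_La) auto
  then show ?thesis
    using False by (subst has_sum_cong[OF eq]) simp_all
qed

lemma has_sum_La_upper_boundary:
  assumes len: "length s = m" "length w = m" and wn: "\<And>i. i < m \<Longrightarrow> norm (w!i) < 1"
    and c: "norm c < 1" and j: "0 < j" "j \<le> m"
  shows "((\<lambda>ks. La_term s w ks * pred_pow_geom n c (Suc (ks!(j-1)))) has_sum
           c * La (s[j-1 := s!(j-1) - int n]) (w[j-1 := w!(j-1) * c])) (La_index m)"
proof -
  have "((\<lambda>ks. c * (La_term s w ks * of_nat (ks!(j-1))^n * c^(ks!(j-1)))) has_sum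
           c * La (s[j-1 := s!(j-1) - int n]) (w[j-1 := w!(j-1) * c])) (La_index m)"
    using assms by (intro has_sum_cmult_right has_sum_La_list_update) auto
  then show ?thesis
    by (simp add: pred_pow_geom_def mult_ac)
qed

lemma has_sum_La_telescoped:
  assumes len: "length s = Suc m" "length w = Suc m" and j: "j \<le> m" and sj: "s!j = - int n"
    and wn: "\<And>i. i < Suc m \<Longrightarrow> norm (w!i) < 1"
  defines "g \<equiv> pred_pow_geom n (w!j)"
  shows "((\<lambda>ks. La_term (remove_nth j s) (remove_nth j w) ks *
                  (g (fiber_lower j ks) - (if 0 < j then g (Suc (ks!(j-1))) else 0)))
          has_sum (1 - w!j) * La s w + (\<Sum>l<n. of_nat (n choose l) * (-1)^(n-l) * La (s[j := - int l]) w))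
          (La_index m)"
proof (rule has_sum_La_index_Suc[OF _ j])
  define A where "A = La_term (remove_nth j s) (remove_nth j w)"
  have "((\<lambda>ks. (1 - w!j) * La_term s w ks
            + (\<Sum>l<n. of_nat (n choose l) * (-1)^(n-l) * La_term (s[j := - int l]) w ks))
          has_sum (1 - w!j) * La s w + (\<Sum>l<n. of_nat (n choose l) * (-1)^(n-l) * La (s[j := - int l]) w))
          (La_index (Suc m))"
    using len wn by (intro has_sum_add has_sum_cmult_right has_sum_sum has_sum_La) auto
  then show "((\<lambda>ks. A (remove_nth j ks) * (g (ks!j) - g (Suc (ks!j))))
          has_sum (1 - w!j) * La s w + (\<Sum>l<n. of_nat (n choose l) * (-1)^(n-l) * La (s[j := - int l]) w))
          (La_index (Suc m))"
    by (simp only: has_sum_cong[OF La_term_telescope[OF len j sj]] A_def g_def)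
  fix ks assume ks: "ks \<in> La_index m"
  then have "j \<le> length ks"
    using j by (simp add: La_index_def)
  moreover have "summable (\<lambda>k. norm (g k))"
    unfolding g_def using wn j by (intro summable_norm_pred_pow_geom) simp
  ultimately show "((\<lambda>k. A (remove_nth j (insert_nth j k ks)) *
                      (g (insert_nth j k ks ! j) - g (Suc (insert_nth j k ks ! j))))
                    has_sum A ks * (g (fiber_lower j ks) - (if 0 < j then g (Suc (ks!(j-1))) else 0)))
                   (La_fiber j ks)"
    using has_sum_cmult_right[OF has_sum_telescope_La_fiber[OF ks j], of g "A ks"] by simp
qed

lemma La_recurrence:
  assumes len: "length s = Suc m" "length w = Suc m" and j: "j \<le> m" and sj: "s!j = - int n"
    and wn: "\<And>i. i < Suc m \<Longrightarrow> norm (w!i) < 1"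
  shows "(1 - w!j) * La s w + (\<Sum>l<n. of_nat (n choose l) * (-1)^(n-l) * La (s[j := - int l]) w) =
     (if j < m then \<Sum>a\<le>n. of_nat (n choose a) * (-1)^(n-a) *
                           La (merge_nth (\<lambda>x _. x - int a) j j s) (merge_nth (*) j j w)
      else 0^n * w!j * La (remove_nth j s) (remove_nth j w))
   - (if 0 < j then w!j * La (merge_nth (\<lambda>x _. x - int n) (j-1) j s) (merge_nth (*) (j-1) j w)
      else 0)"
    (is "?L = ?R1 - ?R2")
proof -
  define c where "c = w!j"
  define g where "g = pred_pow_geom n c"
  define A where "A = La_term (remove_nth j s) (remove_nth j w)"
  have c: "norm c < 1"
    using wn j by (simp add: c_def)
  have len': "length (remove_nth j s) = m" "length (remove_nth j w) = m"
    using len by auto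
  have wn': "norm (remove_nth j w ! i) < 1" if "i < m" for i
    using that len wn by (auto simp: nth_remove_nth)
  have lower: "((\<lambda>ks. A ks * g (fiber_lower j ks)) has_sum ?R1) (La_index m)"
    using has_sum_La_lower_boundary[OF len' wn' c j, of n] unfolding A_def g_def c_def merge_nth_def .
  have upper: "((\<lambda>ks. if 0 < j then A ks * g (Suc (ks!(j-1))) else 0) has_sum ?R2) (La_index m)"
    using has_sum_La_upper_boundary[OF len' wn' c _ j, of n]
    unfolding A_def g_def c_def merge_nth_def by (cases "0 < j") simp_all
  have "((\<lambda>ks. A ks * g (fiber_lower j ks) + - (if 0 < j then A ks * g (Suc (ks!(j-1))) else 0))
          has_sum (?R1 + - ?R2)) (La_index m)"
    using lower upper by (intro has_sum_add has_sum_uminusI)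
  moreover have "(\<lambda>ks. A ks * g (fiber_lower j ks) + - (if 0 < j then A ks * g (Suc (ks!(j-1))) else 0)) =
                 (\<lambda>ks. A ks * (g (fiber_lower j ks) + - (if 0 < j then g (Suc (ks!(j-1))) else 0)))"
    by (simp add: fun_eq_iff right_diff_distrib)
  ultimately have "((\<lambda>ks. A ks * (g (fiber_lower j ks) - (if 0 < j then g (Suc (ks!(j-1))) else 0)))
                     has_sum (?R1 - ?R2)) (La_index m)"
    by (simp only: diff_conv_add_uminus)
  with has_sum_La_telescoped[OF len j sj wn] show ?thesis
    unfolding A_def g_def c_def by (rule has_sum_unique)
qed

section \<open>Products of the variables over disjoint blocks\<close>

definition block_prods :: "complex list \<Rightarrow> nat set list \<Rightarrow> complex list" where
  "block_prods z Js = map (\<lambda>J. \<Prod>j\<in>J. z ! j) Js"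

definition disjoint_blocks :: "nat \<Rightarrow> nat set list \<Rightarrow> bool" where
  "disjoint_blocks p Js \<longleftrightarrow>
     (\<forall>i<length Js. Js!i \<noteq> {} \<and> Js!i \<subseteq> {..<p}) \<and>
     (\<forall>a<length Js. \<forall>b<length Js. a \<noteq> b \<longrightarrow> Js!a \<inter> Js!b = {})"

definition unit_polydisc :: "nat \<Rightarrow> complex list set" where
  "unit_polydisc p = {z. length z = p \<and> (\<forall>j<p. norm (z!j) < 1)}"

lemma norm_prod_less_1:
  assumes z: "z \<in> unit_polydisc p" and J: "J \<noteq> {}" "J \<subseteq> {..<p}"
  shows "norm (\<Prod>j\<in>J. z!j) < 1"
proof -
  obtain k where k: "k \<in> J"
    using J(1) by blast
  have "norm (\<Prod>j\<in>J. z!j) = (\<Prod>j\<in>J. norm (z!j))"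
    by (simp add: prod_norm)
  also have "\<dots> < (\<Prod>j\<in>J. 1)"
  proof (rule prod_mono_strict[OF k])
    show "finite J"
      using J(2) by (rule finite_subset) simp
    show "norm (z!k) < 1" "\<And>j. j \<in> J \<Longrightarrow> 0 \<le> norm (z!j) \<and> norm (z!j) \<le> 1"
      using J(2) k z by (auto simp: unit_polydisc_def less_imp_le subset_iff)
  qed simp
  finally show ?thesis
    by simp
qed

lemma block_prods_remove_nth: "block_prods z (remove_nth j Js) = remove_nth j (block_prods z Js)"
  by (simp add: block_prods_def remove_nth_map)

lemma block_prods_merge_nth:
  assumes Js: "disjoint_blocks p Js" and j: "j < length Js" and t: "t < length Js - 1"
  shows "block_prods z (merge_nth (\<union>) t j Js) = merge_nth (*) t j (block_prods z Js)"
proof -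
  define t' where "t' = (if t < j then t else Suc t)"
  have t': "remove_nth j Js ! t = Js!t'" "t' < length Js" "t' \<noteq> j"
    using t by (auto simp: t'_def nth_remove_nth)
  then have "Js!t' \<inter> Js!j = {}" "finite (Js!t')" "finite (Js!j)"
    using Js j by (auto simp: disjoint_blocks_def intro: finite_subset)
  then show ?thesis
    using j t t' by (simp add: merge_nth_def block_prods_def map_update prod.union_disjoint remove_nth_map nth_remove_nth)
qed

lemma disjoint_blocks_remove_nth:
  assumes Js: "disjoint_blocks p Js" and j: "j < length Js"
  shows "disjoint_blocks p (remove_nth j Js)"
proof -
  define f where "f i = (if i < j then i else Suc i)" for i
  have f: "remove_nth j Js ! i = Js ! f i" "f i < length Js" if "i < length Js - 1" for i
    using that by (auto simp: f_def nth_remove_nth)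
  have "f a \<noteq> f b" if "a \<noteq> b" for a b
    using that by (auto simp: f_def)
  with f Js show ?thesis
    unfolding disjoint_blocks_def by auto
qed

lemma disjoint_blocks_merge_nth:
  assumes Js: "disjoint_blocks p Js" and j: "j < length Js" and t: "t < length Js - 1"
  shows "disjoint_blocks p (merge_nth (\<union>) t j Js)"
    (is "disjoint_blocks p ?K")
proof -
  have nonempty: "\<And>i. i < length Js \<Longrightarrow> Js!i \<noteq> {} \<and> Js!i \<subseteq> {..<p}"
    and disjoint: "\<And>a b. a < length Js \<Longrightarrow> b < length Js \<Longrightarrow> a \<noteq> b \<Longrightarrow> Js!a \<inter> Js!b = {}"
    using Js by (auto simp: disjoint_blocks_def)
  define f where "f i = (if i < j then i else Suc i)" for i
  have f: "f i < length Js" "f i \<noteq> j" if "i < length Js - 1" for i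
    using that by (auto simp: f_def)
  have f_inj: "f a \<noteq> f b" if "a \<noteq> b" for a b
    using that by (auto simp: f_def)
  have K: "?K ! i = (if i = t then Js ! f t \<union> Js ! j else Js ! f i)" if "i < length Js - 1" for i
    using that t by (auto simp: merge_nth_def f_def nth_remove_nth)
  have "?K!i \<noteq> {} \<and> ?K!i \<subseteq> {..<p}" if "i < length ?K" for i
    using that K nonempty[OF f(1)] nonempty[OF j] f t by auto
  moreover have "?K!a \<inter> ?K!b = {}" if ab: "a < length ?K" "b < length ?K" "a \<noteq> b" for a b
  proof -
    have "Js ! f a \<inter> Js ! f b = {}" "Js ! f a \<inter> Js ! j = {}" "Js ! f b \<inter> Js ! j = {}"
      using ab disjoint f f_inj j by auto
    then show ?thesis
      using K ab by auto
  qed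
  ultimately show ?thesis
    unfolding disjoint_blocks_def by blast
qed

definition pos_weight :: "int list \<Rightarrow> int" where
  "pos_weight xs = sum_list (map (max 0) xs)"

lemma pos_weight_remove_nth:
  assumes "j < length xs"
  shows "pos_weight (remove_nth j xs) \<le> pos_weight xs"
proof -
  have "pos_weight xs = pos_weight (take j xs @ xs!j # drop (Suc j) xs)"
    using id_take_nth_drop[OF assms] by simp
  also have "\<dots> = pos_weight (remove_nth j xs) + max 0 (xs!j)"
    using assms by (simp add: pos_weight_def remove_nth_conv_take_drop)
  finally show ?thesis
    by simp
qed

lemma pos_weight_list_update:
  assumes "t < length xs"
  shows "pos_weight (xs[t := x]) = pos_weight xs + max 0 x - max 0 (xs!t)"
proof -
  have "pos_weight xs = pos_weight (take t xs @ xs!t # drop (Suc t) xs)"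
    using id_take_nth_drop[OF assms] by simp
  moreover have "pos_weight (xs[t := x]) = pos_weight (take t xs @ x # drop (Suc t) xs)"
    using upd_conv_take_nth_drop[OF assms] by simp
  ultimately show ?thesis
    by (simp add: pos_weight_def)
qed

lemma pos_weight_merge_nth_le:
  assumes "j < length xs" "t < length xs - 1"
  shows "pos_weight (merge_nth (\<lambda>x _. x - int a) t j xs) \<le> pos_weight xs"
  using pos_weight_list_update[of t "remove_nth j xs"] pos_weight_remove_nth[of j xs] assms
  by (simp add: merge_nth_def)

section \<open>Linear combinations of polylogarithms\<close>

definition cexpr_prod :: "nat set \<Rightarrow> cexpr" where
  "cexpr_prod J = foldr (\<lambda>j c. CMul (CZ j) c) (sorted_list_of_set J) (CConst 1)"

lemma ceval_cexpr_prod: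
  assumes "finite J"
  shows "ceval (cexpr_prod J) z = (\<Prod>j\<in>J. z!j)"
proof -
  have "ceval (foldr (\<lambda>j c. CMul (CZ j) c) js (CConst 1)) z = (\<Prod>j\<leftarrow>js. z!j)" for js
    by (induction js) auto
  then show ?thesis
    using prod.distinct_set_conv_list[of "sorted_list_of_set J" "\<lambda>j. z!j"] assms
    by (simp add: cexpr_prod_def)
qed

lemma cexpr_wf_cexpr_prod:
  assumes "J \<subseteq> {..<p}"
  shows "cexpr_wf p (cexpr_prod J)"
proof -
  have "set js \<subseteq> {..<p} \<Longrightarrow> cexpr_wf p (foldr (\<lambda>j c. CMul (CZ j) c) js (CConst 1))" for js
    by (induction js) auto
  moreover have "finite J"
    using assms by (rule finite_subset) simp
  ultimately show ?thesis
    using assms by (simp add: cexpr_prod_def)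
qed

type_synonym La_summand = "cexpr \<times> int list \<times> nat set list"

definition admissible_summand :: "nat \<Rightarrow> nat \<Rightarrow> int \<Rightarrow> La_summand \<Rightarrow> bool" where
  "admissible_summand p L B t \<longleftrightarrow> (case t of (c, s, Js) \<Rightarrow>
        cexpr_wf p c
      \<and> length s \<le> L
      \<and> (\<forall>j<length s. s ! j \<ge> 1)
      \<and> sum_list s \<le> B
      \<and> length Js = length s
      \<and> (\<forall>J\<in>set Js. J \<noteq> {} \<and> J \<subseteq> {..<p}))"

definition eval_summand :: "complex list \<Rightarrow> La_summand \<Rightarrow> complex" where
  "eval_summand z t = (case t of (c, s, Js) \<Rightarrow> ceval c z * La s (block_prods z Js))"

definition La_combination :: "nat \<Rightarrow> nat \<Rightarrow> int \<Rightarrow> (complex list \<Rightarrow> complex) \<Rightarrow> bool" where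
  "La_combination p L B f \<longleftrightarrow> (\<exists>ts. (\<forall>t\<in>set ts. admissible_summand p L B t) \<and>
     (\<forall>z\<in>unit_polydisc p. f z = (\<Sum>t\<leftarrow>ts. eval_summand z t)))"

lemma La_combination_zero: "La_combination p L B (\<lambda>z. 0)"
  unfolding La_combination_def by (rule exI[of _ "[]"]) simp

lemma La_combination_add:
  assumes "La_combination p L B f" "La_combination p L B g"
  shows "La_combination p L B (\<lambda>z. f z + g z)"
proof -
  obtain ts us where
    "\<forall>t\<in>set ts. admissible_summand p L B t" "\<forall>z\<in>unit_polydisc p. f z = (\<Sum>t\<leftarrow>ts. eval_summand z t)"
    "\<forall>t\<in>set us. admissible_summand p L B t" "\<forall>z\<in>unit_polydisc p. g z = (\<Sum>t\<leftarrow>us. eval_summand z t)"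
    using assms unfolding La_combination_def by blast
  then show ?thesis
    unfolding La_combination_def by (intro exI[of _ "ts @ us"]) auto
qed

lemma La_combination_cmult:
  assumes "cexpr_wf p c" "La_combination p L B f"
  shows "La_combination p L B (\<lambda>z. ceval c z * f z)"
proof -
  obtain ts where ts: "\<forall>t\<in>set ts. admissible_summand p L B t"
    "\<forall>z\<in>unit_polydisc p. f z = (\<Sum>t\<leftarrow>ts. eval_summand z t)"
    using assms(2) unfolding La_combination_def by blast
  define scale :: "La_summand \<Rightarrow> La_summand"
    where "scale t = (case t of (c', s, Js) \<Rightarrow> (CMul c c', s, Js))" for t
  have "eval_summand z (scale t) = ceval c z * eval_summand z t" for z t
    by (cases t) (simp add: eval_summand_def scale_def)
  moreover have "admissible_summand p L B (scale t)" if "admissible_summand p L B t" for t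
    using that assms(1) by (cases t) (simp add: admissible_summand_def scale_def)
  ultimately show ?thesis
    unfolding La_combination_def using ts
    by (intro exI[of _ "map scale ts"]) (simp add: sum_list_const_mult o_def)
qed

lemma La_combination_cong:
  assumes "La_combination p L B f" "\<And>z. z \<in> unit_polydisc p \<Longrightarrow> f z = g z"
  shows "La_combination p L B g"
  using assms unfolding La_combination_def by metis

lemma La_combination_sum:
  assumes "finite I" "\<And>i. i \<in> I \<Longrightarrow> La_combination p L B (f i)"
  shows "La_combination p L B (\<lambda>z. \<Sum>i\<in>I. f i z)"
  using assms
  by (induction I rule: finite_induct) (simp_all add: La_combination_zero La_combination_add)

lemma La_combination_La_pos:
  assumes "length s \<le> L" "\<forall>i<length s. 1 \<le> s!i" "pos_weight s \<le> B"
    "length Js = length s" "disjoint_blocks p Js"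
  shows "La_combination p L B (\<lambda>z. La s (block_prods z Js))"
proof -
  have "map (max 0) s = s"
    using assms(2) by (intro map_idI) (auto simp: in_set_conv_nth)
  then show ?thesis
    using assms unfolding La_combination_def
    by (intro exI[of _ "[(CConst 1, s, Js)]"])
       (auto simp: admissible_summand_def eval_summand_def pos_weight_def disjoint_blocks_def all_set_conv_all_nth)
qed

lemma La_combination_solve:
  assumes eq: "\<And>z. z \<in> unit_polydisc p \<Longrightarrow> (1 - (\<Prod>i\<in>J. z!i)) * f z + S z = R z"
    and R: "La_combination p L B R" and S: "La_combination p L B S"
    and J: "J \<noteq> {}" "J \<subseteq> {..<p}"
  shows "La_combination p L B f"
proof -
  have "La_combination p L B (\<lambda>z. ceval (CInvOneMinus J) z * (R z + ceval (CConst (-1)) z * S z))"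
    using R S J by (intro La_combination_cmult La_combination_add) auto
  then show ?thesis
  proof (rule La_combination_cong)
    fix z assume z: "z \<in> unit_polydisc p"
    have "1 - (\<Prod>i\<in>J. z!i) \<noteq> 0"
      using norm_prod_less_1[OF z J] by auto
    with eq[OF z] show "ceval (CInvOneMinus J) z * (R z + ceval (CConst (-1)) z * S z) = f z"
      by (simp add: field_simps)
  qed
qed

lemma La_recurrence_blocks:
  assumes len: "length s = Suc m" "length Js = Suc m" and j: "j \<le> m" and sj: "s!j = - int n"
    and Js: "disjoint_blocks p Js" and z: "z \<in> unit_polydisc p"
  defines "P \<equiv> \<Prod>i\<in>Js!j. z!i"
  shows "(1 - P) * La s (block_prods z Js)
           + (\<Sum>l<n. of_nat (n choose l) * (-1)^(n-l) * La (s[j := - int l]) (block_prods z Js)) =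
     (if j < m then \<Sum>a\<le>n. of_nat (n choose a) * (-1)^(n-a) *
                           La (merge_nth (\<lambda>x _. x - int a) j j s) (block_prods z (merge_nth (\<union>) j j Js))
      else 0^n * P * La (remove_nth j s) (block_prods z (remove_nth j Js)))
   - (if 0 < j then P * La (merge_nth (\<lambda>x _. x - int n) (j-1) j s) (block_prods z (merge_nth (\<union>) (j-1) j Js))
      else 0)"
proof -
  define w where "w = block_prods z Js"
  have w: "length w = Suc m" "w!j = P"
    using len j by (simp_all add: w_def block_prods_def P_def)
  have "norm (w!i) < 1" if "i < Suc m" for i
    using norm_prod_less_1[OF z] Js that len by (simp add: w_def block_prods_def disjoint_blocks_def)
  note recurrence = La_recurrence[OF len(1) w(1) j sj this]
  have "block_prods z (merge_nth (\<union>) t j Js) = merge_nth (*) t j w" if "t < m" for t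
    using block_prods_merge_nth[OF Js, of j t] len j that by (simp add: w_def)
  moreover have "block_prods z (remove_nth j Js) = remove_nth j w"
    by (simp add: w_def block_prods_remove_nth)
  ultimately show ?thesis
    using recurrence j unfolding w_def[symmetric] w(2)[symmetric] by (cases "j < m"; cases "0 < j") simp_all
qed

lemma La_combination_recurrence_rhs:
  assumes shorter: "\<And>s' Js'. length s' < Suc m \<Longrightarrow> length s' = length Js' \<Longrightarrow> disjoint_blocks p Js' \<Longrightarrow>
        length s' \<le> L \<Longrightarrow> pos_weight s' \<le> B \<Longrightarrow> La_combination p L B (\<lambda>z. La s' (block_prods z Js'))"
    and len: "length s = Suc m" "length Js = Suc m" and j: "j \<le> m"
    and Js: "disjoint_blocks p Js" and L: "Suc m \<le> L" and B: "pos_weight s \<le> B"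
  shows "La_combination p L B (\<lambda>z.
     (if j < m then \<Sum>a\<le>n. of_nat (n choose a) * (-1)^(n-a) *
                           La (merge_nth (\<lambda>x _. x - int a) j j s) (block_prods z (merge_nth (\<union>) j j Js))
      else 0^n * (\<Prod>i\<in>Js!j. z!i) * La (remove_nth j s) (block_prods z (remove_nth j Js)))
   - (if 0 < j then (\<Prod>i\<in>Js!j. z!i) *
                      La (merge_nth (\<lambda>x _. x - int n) (j-1) j s) (block_prods z (merge_nth (\<union>) (j-1) j Js))
      else 0))"
proof -
  have Jj: "Js!j \<subseteq> {..<p}"
    using Js len j by (auto simp: disjoint_blocks_def)
  then have P: "ceval (cexpr_prod (Js!j)) z = (\<Prod>i\<in>Js!j. z!i)" for z
    by (intro ceval_cexpr_prod) (auto intro: finite_subset)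
  have wf_P: "cexpr_wf p (cexpr_prod (Js!j))"
    using Jj by (rule cexpr_wf_cexpr_prod)
  have merged: "La_combination p L B (\<lambda>z. La (merge_nth (\<lambda>x _. x - int a) t j s) (block_prods z (merge_nth (\<union>) t j Js)))"
    if "t < m" for t a
    using len L j that B pos_weight_merge_nth_le[of j s t a] disjoint_blocks_merge_nth[OF Js, of j t]
    by (intro shorter) auto
  have "La_combination p L B (\<lambda>z. if j < m then \<Sum>a\<le>n. of_nat (n choose a) * (-1)^(n-a) *
                           La (merge_nth (\<lambda>x _. x - int a) j j s) (block_prods z (merge_nth (\<union>) j j Js))
      else 0^n * (\<Prod>i\<in>Js!j. z!i) * La (remove_nth j s) (block_prods z (remove_nth j Js)))"
  proof (cases "j < m")
    case True
    have "La_combination p L B (\<lambda>z. \<Sum>a\<le>n. ceval (CConst (of_nat (n choose a) * (-1)^(n-a))) z *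
            La (merge_nth (\<lambda>x _. x - int a) j j s) (block_prods z (merge_nth (\<union>) j j Js)))"
      using True by (intro La_combination_sum La_combination_cmult merged) auto
    then show ?thesis
      using True by (simp add: of_rat_mult of_rat_power)
  next
    case False
    have "La_combination p L B (\<lambda>z. La (remove_nth j s) (block_prods z (remove_nth j Js)))"
      using len L j disjoint_blocks_remove_nth[OF Js] pos_weight_remove_nth[of j s] B by (intro shorter) auto
    then have "La_combination p L B (\<lambda>z. ceval (CMul (CConst (0^n)) (cexpr_prod (Js!j))) z *
                 La (remove_nth j s) (block_prods z (remove_nth j Js)))"
      using wf_P by (intro La_combination_cmult) auto
    then show ?thesis
      using False by (simp add: P of_rat_power)
  qed
  moreover have "La_combination p L B (\<lambda>z. if 0 < j then (\<Prod>i\<in>Js!j. z!i) *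
                      La (merge_nth (\<lambda>x _. x - int n) (j-1) j s) (block_prods z (merge_nth (\<union>) (j-1) j Js))
      else 0)"
    using La_combination_cmult[OF wf_P merged[of "j-1" n]] j
    by (cases "0 < j") (simp_all add: P La_combination_zero)
  ultimately show ?thesis
    using La_combination_add[OF _ La_combination_cmult[of p "CConst (-1)"]] by simp
qed

lemma La_combination_step:
  assumes shorter: "\<And>s' Js'. length s' < Suc m \<Longrightarrow> length s' = length Js' \<Longrightarrow> disjoint_blocks p Js' \<Longrightarrow>
        length s' \<le> L \<Longrightarrow> pos_weight s' \<le> B \<Longrightarrow> La_combination p L B (\<lambda>z. La s' (block_prods z Js'))"
    and smaller: "\<And>l. l < n \<Longrightarrow> La_combination p L B (\<lambda>z. La (s[j := - int l]) (block_prods z Js))"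
    and len: "length s = Suc m" "length Js = Suc m" and j: "j \<le> m" and sj: "s!j = - int n"
    and Js: "disjoint_blocks p Js" and L: "Suc m \<le> L" and B: "pos_weight s \<le> B"
  shows "La_combination p L B (\<lambda>z. La s (block_prods z Js))"
proof (rule La_combination_solve[OF La_recurrence_blocks[OF len j sj Js]
                                   La_combination_recurrence_rhs[OF shorter len j Js L B]])
  have "La_combination p L B (\<lambda>z. \<Sum>l<n. ceval (CConst (of_nat (n choose l) * (-1)^(n-l))) z *
          La (s[j := - int l]) (block_prods z Js))"
    by (intro La_combination_sum La_combination_cmult smaller) auto
  then show "La_combination p L B (\<lambda>z. \<Sum>l<n. of_nat (n choose l) * (-1)^(n-l) *
               La (s[j := - int l]) (block_prods z Js))"
    by (simp add: of_rat_mult of_rat_power)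
  show "Js!j \<noteq> {}" "Js!j \<subseteq> {..<p}"
    using Js len j by (auto simp: disjoint_blocks_def)
qed

lemma La_combination_La:
  assumes "length s = length Js" "disjoint_blocks p Js" "length s \<le> L" "pos_weight s \<le> B"
  shows "La_combination p L B (\<lambda>z. La s (block_prods z Js))"
  using assms
proof (induction "length s" arbitrary: s Js rule: less_induct)
  case less
  note outer = less.prems
  show ?case
  proof (cases "\<forall>i<length s. 1 \<le> s!i")
    case True
    then show ?thesis
      using less.prems by (intro La_combination_La_pos) auto
  next
    case False
    then obtain j where j: "j < length s" "s!j \<le> 0"
      by (auto simp: not_le)
    then obtain m where m: "length s = Suc m" "j \<le> m"
      by (cases "length s") auto
    have "La_combination p L B (\<lambda>z. La s' (block_prods z Js))"
      if "length s' = Suc m" "s'!j = - int n" "pos_weight s' \<le> B" for n s'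
      using that
    proof (induction n arbitrary: s' rule: less_induct)
      case (less n)
      show ?case
      proof (rule La_combination_step[OF _ _ less.prems(1) _ m(2) less.prems(2)])
        fix l assume "l < n"
        moreover have "pos_weight (s'[j := - int l]) = pos_weight s'"
          using less.prems m by (subst pos_weight_list_update) auto
        ultimately show "La_combination p L B (\<lambda>z. La (s'[j := - int l]) (block_prods z Js))"
          using less.IH[of l "s'[j := - int l]"] less.prems m by simp
      qed (use less.hyps less.prems outer m in auto)
    qed
    moreover have "s!j = - int (nat (- s!j))"
      using j by simp
    ultimately show ?thesis
      using m less.prems by blast
  qed
qed

theorem mainTheorem8:
  fixes s :: "int list"
  assumes "length s \<ge> 1"
    and "\<exists>j<length s. s ! j \<le> 0"
  shows "\<exists>terms :: (cexpr \<times> int list \<times> nat set list) list.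
    (\<forall>(c, s', Js) \<in> set terms.
        cexpr_wf (length s) c
      \<and> length s' \<le> length s
      \<and> (\<forall>j<length s'. s' ! j \<ge> 1)
      \<and> sum_list s' \<le> sum_list (map (\<lambda>x. max 0 x) s)
      \<and> length Js = length s'
      \<and> (\<forall>J\<in>set Js. J \<noteq> {} \<and> J \<subseteq> {..<length s}))
    \<and> (\<forall>z :: complex list. length z = length s \<longrightarrow>
          (\<forall>j<length z. norm (z ! j) < 1 \<and> z ! j \<noteq> 0) \<longrightarrow>
          La s z = sum_list (map (\<lambda>(c, s', Js).
                      ceval c z * La s' (map (\<lambda>J. \<Prod>j\<in>J. z ! j) Js)) terms))"
proof -
  define p where "p = length s"
  define singletons where "singletons = map (\<lambda>i. {i}) [0..<p]"
  have "block_prods z singletons = z" if "length z = p" for z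
    using that by (intro nth_equalityI) (auto simp: block_prods_def singletons_def)
  moreover have "La_combination p p (pos_weight s) (\<lambda>z. La s (block_prods z singletons))"
    by (rule La_combination_La) (auto simp: singletons_def p_def disjoint_blocks_def)
  ultimately obtain terms where "\<forall>t\<in>set terms. admissible_summand p p (pos_weight s) t"
    "\<forall>z\<in>unit_polydisc p. La s z = (\<Sum>t\<leftarrow>terms. eval_summand z t)"
    unfolding La_combination_def unit_polydisc_def by auto
  then show ?thesis
    unfolding p_def admissible_summand_def eval_summand_def block_prods_def pos_weight_def unit_polydisc_def
    by (intro exI[of _ terms]) (auto split: prod.splits)
qed

end
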